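(* Let $G$ be a vertex-color-avoiding connected graph and let $v$ be a cut-vertex of $G$ (a vertex whose removal disconnects $G$). Then all but one of the connected components of $G-v$ consist only of vertices having the same color as $v$.
   Context: Vertex-colorings are arbitrary (not necessarily proper). Two vertices $u,w$ are vertex-$c$-avoiding connected (for a color $c$) if there is a $u$-$w$ path and either at least one of $u,w$ has color $c$ or some $u$-$w$ path contains no vertex of color $c$. A graph is vertex-color-avoiding connected if any two vertices are vertex-$c$-avoiding connected for every color $c$. *)

theory Defs
  imports Main
begin

definition simple_graph :: "'a set \<Rightarrow> ('a \<Rightarrow> 'a \<Rightarrow> bool) \<Rightarrow> bool" where
  "simple_graph V E \<longleftrightarrow> finite V \<and> (\<forall>x y. E x y \<longrightarrow> E y x) \<and> (\<forall>x. \<not> E x x)"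

definition is_path :: "'a set \<Rightarrow> ('a \<Rightarrow> 'a \<Rightarrow> bool) \<Rightarrow> 'a \<Rightarrow> 'a \<Rightarrow> 'a list \<Rightarrow> bool" where
  "is_path V E u w p \<longleftrightarrow> p \<noteq> [] \<and> hd p = u \<and> last p = w \<and> set p \<subseteq> V \<and> distinct p
     \<and> (\<forall>i. Suc i < length p \<longrightarrow> E (p ! i) (p ! Suc i))"

definition graph_connected :: "'a set \<Rightarrow> ('a \<Rightarrow> 'a \<Rightarrow> bool) \<Rightarrow> bool" where
  "graph_connected V E \<longleftrightarrow> (\<forall>u\<in>V. \<forall>w\<in>V. \<exists>p. is_path V E u w p)"

definition components :: "'a set \<Rightarrow> ('a \<Rightarrow> 'a \<Rightarrow> bool) \<Rightarrow> 'a set set" where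
  "components V E = {{w \<in> V. \<exists>p. is_path V E u w p} | u. u \<in> V}"

definition cut_vertex :: "'a set \<Rightarrow> ('a \<Rightarrow> 'a \<Rightarrow> bool) \<Rightarrow> 'a \<Rightarrow> bool" where
  "cut_vertex V E v \<longleftrightarrow> v \<in> V \<and> \<not> graph_connected (V - {v}) E"

definition vertex_avoiding_connected ::
  "'a set \<Rightarrow> ('a \<Rightarrow> 'a \<Rightarrow> bool) \<Rightarrow> ('a \<Rightarrow> 'c) \<Rightarrow> 'c \<Rightarrow> 'a \<Rightarrow> 'a \<Rightarrow> bool" where
  "vertex_avoiding_connected V E col c u w \<longleftrightarrow>
     (\<exists>p. is_path V E u w p) \<and>
     (col u = c \<or> col w = c \<or> (\<exists>p. is_path V E u w p \<and> (\<forall>x\<in>set p. col x \<noteq> c)))"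

definition vca_connected :: "'a set \<Rightarrow> ('a \<Rightarrow> 'a \<Rightarrow> bool) \<Rightarrow> ('a \<Rightarrow> 'c) \<Rightarrow> bool" where
  "vca_connected V E col \<longleftrightarrow>
     (\<forall>c. \<forall>u\<in>V. \<forall>w\<in>V. vertex_avoiding_connected V E col c u w)"

end

theory Submission
  imports Defs
begin

text \<open>Two vertices of colour different from that of the cut vertex v are joined by a
path avoiding the colour of v, hence avoiding v itself, so they lie in the same
component of G - v. Thus at most one component contains such a vertex.\<close>

definition induced_adj :: "'a set \<Rightarrow> ('a \<Rightarrow> 'a \<Rightarrow> bool) \<Rightarrow> 'a \<Rightarrow> 'a \<Rightarrow> bool" where
  "induced_adj V E x y \<longleftrightarrow> x \<in> V \<and> y \<in> V \<and> E x y"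

definition path_rel :: "'a set \<Rightarrow> ('a \<Rightarrow> 'a \<Rightarrow> bool) \<Rightarrow> ('a \<times> 'a) set" where
  "path_rel V E = {(u, w). \<exists>p. is_path V E u w p}"

lemma is_path_rtranclp_nth:
  assumes "is_path V E u w p" "i < length p"
  shows "(induced_adj V E)\<^sup>*\<^sup>* u (p ! i)"
  using assms(2)
proof (induction i)
  case 0
  then show ?case using assms(1) by (simp add: is_path_def hd_conv_nth)
next
  case (Suc i)
  have "induced_adj V E (p ! i) (p ! Suc i)"
    using assms(1) Suc.prems nth_mem[of i p] nth_mem[of "Suc i" p]
    by (auto simp: is_path_def induced_adj_def)
  then show ?case using Suc by (simp add: rtranclp.rtrancl_into_rtrancl)
qed

lemma is_path_rtranclp:
  assumes "is_path V E u w p"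
  shows "(induced_adj V E)\<^sup>*\<^sup>* u w"
proof -
  have "p \<noteq> []" "w = p ! (length p - 1)"
    using assms by (auto simp: is_path_def last_conv_nth)
  then show ?thesis using is_path_rtranclp_nth[OF assms, of "length p - 1"] by simp
qed

lemma is_path_take:
  assumes "is_path V E u w p" "i < length p"
  shows "is_path V E u (p ! i) (take (Suc i) p)"
proof -
  have "last (take (Suc i) p) = p ! i"
    using assms(2) by (simp add: take_Suc_conv_app_nth)
  then show ?thesis
    using assms set_take_subset[of "Suc i" p] by (auto simp: is_path_def hd_take)
qed

lemma is_path_snoc:
  assumes "is_path V E u w p" "z \<in> V" "z \<notin> set p" "E w z"
  shows "is_path V E u z (p @ [z])"
  using assms unfolding is_path_def
  by (auto simp: nth_append) (metis Suc_lessI diff_Suc_1 last_conv_nth less_Suc_eq_0_disj not_less_eq)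

text \<open>Revisiting a vertex is handled by cutting the path back to its first visit,
which keeps the path simple.\<close>

lemma rtranclp_ex_is_path:
  assumes "(induced_adj V E)\<^sup>*\<^sup>* u w" "u \<in> V"
  shows "\<exists>p. is_path V E u w p"
  using assms(1)
proof (induction rule: rtranclp_induct)
  case base
  have "is_path V E u u [u]" using assms(2) by (simp add: is_path_def)
  then show ?case by blast
next
  case (step y z)
  then obtain p where p: "is_path V E u y p" by blast
  show ?case
  proof (cases "z \<in> set p")
    case True
    then obtain i where "i < length p" "p ! i = z" by (metis in_set_conv_nth)
    then show ?thesis using is_path_take[OF p] by metis
  next
    case False
    then show ?thesis using is_path_snoc[OF p] step(2) by (auto simp: induced_adj_def)
  qed
qed

lemma path_rel_iff_rtranclp:
  "(u, w) \<in> path_rel V E \<longleftrightarrow> u \<in> V \<and> (induced_adj V E)\<^sup>*\<^sup>* u w"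
proof
  assume "(u, w) \<in> path_rel V E"
  then obtain p where p: "is_path V E u w p" by (auto simp: path_rel_def)
  then have "u \<in> V" by (auto simp: is_path_def dest: hd_in_set)
  with p show "u \<in> V \<and> (induced_adj V E)\<^sup>*\<^sup>* u w" by (simp add: is_path_rtranclp)
next
  assume "u \<in> V \<and> (induced_adj V E)\<^sup>*\<^sup>* u w"
  then show "(u, w) \<in> path_rel V E" by (simp add: path_rel_def rtranclp_ex_is_path)
qed

lemma equiv_path_rel:
  assumes "\<forall>x y. E x y \<longrightarrow> E y x"
  shows "equiv V (path_rel V E)"
proof (rule equivI)
  have "(induced_adj V E)\<inverse>\<inverse> = induced_adj V E"
    using assms by (auto simp: induced_adj_def fun_eq_iff)
  then have converse_rtranclp: "(induced_adj V E)\<^sup>*\<^sup>* w u" if "(induced_adj V E)\<^sup>*\<^sup>* u w" for u w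
    using rtranclp_converseI[OF that] by simp
  have in_V: "w \<in> V" if "(induced_adj V E)\<^sup>*\<^sup>* u w" "u \<in> V" for u w
    using that by (induction rule: rtranclp_induct) (auto simp: induced_adj_def)
  show "path_rel V E \<subseteq> V \<times> V"
    using in_V by (auto simp: path_rel_iff_rtranclp)
  show "refl_on V (path_rel V E)"
    using in_V by (auto simp: refl_on_def path_rel_iff_rtranclp)
  show "sym (path_rel V E)"
    using in_V converse_rtranclp by (auto intro!: symI simp: path_rel_iff_rtranclp)
  show "trans (path_rel V E)"
    by (auto intro!: transI simp: path_rel_iff_rtranclp)
qed

lemma components_eq_quotient: "components V E = V // path_rel V E"
proof -
  have "path_rel V E `` {u} = {w \<in> V. \<exists>p. is_path V E u w p}" for u
    by (auto simp: path_rel_def is_path_def)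
  then show ?thesis by (auto simp: components_def quotient_def)
qed

lemma is_path_Diff:
  assumes "is_path V E u w p" "set p \<inter> A = {}"
  shows "is_path (V - A) E u w p"
  using assms by (auto simp: is_path_def)

lemma vca_connected_path_rel_Diff:
  assumes "vca_connected V E col" "x \<in> V - {v}" "y \<in> V - {v}"
    and "col x \<noteq> col v" "col y \<noteq> col v"
  shows "(x, y) \<in> path_rel (V - {v}) E"
proof -
  obtain p where "is_path V E x y p" "\<forall>z\<in>set p. col z \<noteq> col v"
    using assms unfolding vca_connected_def vertex_avoiding_connected_def by blast
  then have "is_path (V - {v}) E x y p" by (intro is_path_Diff) auto
  then show ?thesis by (auto simp: path_rel_def)
qed

lemma quotient_at_most_one_class_meets:
  assumes equiv: "equiv A r" and "A \<noteq> {}"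
    and related: "\<And>x y. x \<in> A \<Longrightarrow> y \<in> A \<Longrightarrow> P x \<Longrightarrow> P y \<Longrightarrow> (x, y) \<in> r"
  shows "\<exists>C0 \<in> A // r. \<forall>C \<in> A // r. C \<noteq> C0 \<longrightarrow> (\<forall>x\<in>C. \<not> P x)"
proof (cases "\<exists>x0 \<in> A. P x0")
  case True
  then obtain x0 where x0: "x0 \<in> A" "P x0" by blast
  have C0: "r `` {x0} \<in> A // r" using x0(1) by (rule quotientI)
  have "C = r `` {x0}" if C: "C \<in> A // r" and x: "x \<in> C" "P x" for C x
  proof -
    have "x \<in> A" using in_quotient_imp_subset[OF equiv C] x(1) by blast
    then have "(x, x0) \<in> r" using related x(2) x0 by blast
    moreover have "x0 \<in> r `` {x0}" using equiv x0(1) by (rule equiv_class_self)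
    ultimately show ?thesis using quotient_eqI[OF equiv C C0 x(1)] by blast
  qed
  then show ?thesis using C0 by blast
next
  case False
  obtain u where "u \<in> A" using \<open>A \<noteq> {}\<close> by blast
  then have "r `` {u} \<in> A // r" by (rule quotientI)
  then show ?thesis using False in_quotient_imp_subset[OF equiv] by blast
qed

theorem lemma3p12:
  fixes V :: "'a set" and E :: "'a \<Rightarrow> 'a \<Rightarrow> bool" and col :: "'a \<Rightarrow> 'c" and v :: 'a
  assumes "simple_graph V E"
    and "vca_connected V E col"
    and "cut_vertex V E v"
  shows "\<exists>C0 \<in> components (V - {v}) E.
           \<forall>C \<in> components (V - {v}) E. C \<noteq> C0 \<longrightarrow> (\<forall>x\<in>C. col x = col v)"
proof -
  have "equiv (V - {v}) (path_rel (V - {v}) E)"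
    using assms(1) by (intro equiv_path_rel) (simp add: simple_graph_def)
  moreover have "V - {v} \<noteq> {}"
    using assms(3) unfolding cut_vertex_def graph_connected_def by blast
  ultimately show ?thesis
    unfolding components_eq_quotient
    by (rule quotient_at_most_one_class_meets[where P = "\<lambda>x. col x \<noteq> col v", simplified])
       (rule vca_connected_path_rel_Diff[OF assms(2)])
qed

end
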